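(* Let $n \ge 1$, let $f \in \mathbb{C}^n$ be a unit vector ($\|f\|_2 = 1$), and let $H, H' \in \mathbb{C}^{n\times n}$ be Hermitian matrices. Then \[ W_1\big(\mu_f^{H}, \mu_f^{H'}\big) \le n\,\|H - H'\|_2 . \]
   Context: For a Hermitian matrix $H \in \mathbb{C}^{n\times n}$, let $\mathrm{spec}(H)$ be its set of distinct eigenvalues and, for $\lambda \in \mathrm{spec}(H)$, let $P_\lambda$ be the orthogonal projection onto the $\lambda$-eigenspace. For a unit vector $f\in\mathbb{C}^n$, the power spectrum of $f$ with respect to $H$ is the discrete probability measure on $\mathbb{R}$ \[ \mu_f^H = \sum_{\lambda \in \mathrm{spec}(H)} \langle f, P_\lambda f\rangle\, \delta_\lambda \] (equivalently $\sum_{i=1}^n |\langle \phi_i, f\rangle|^2 \delta_{\lambda_i}$ for any orthonormal eigenbasis $\phi_i$ with eigenvalues $\lambda_i$). $W_1$ denotes the 1-Wasserstein distance between probability measures on $\mathbb{R}$ (with cost $|s-t|$), and $\|\cdot\|_2$ is the operator (spectral) norm. *)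

theory Defs
  imports "HOL-Analysis.Analysis" "HOL-Probability.Probability"
begin

text \<open>Vectors in C^n are complex ^ 'n (n = CARD('n) >= 1); matrices are complex ^ 'n ^ 'n.\<close>

definition cinner :: "complex ^ 'n \<Rightarrow> complex ^ 'n \<Rightarrow> complex" where
  "cinner x y = (\<Sum>i\<in>UNIV. cnj (x $ i) * y $ i)"

definition adjoint_mat :: "complex ^ 'n ^ 'n \<Rightarrow> complex ^ 'n ^ 'n" where
  "adjoint_mat A = (\<chi> i j. cnj (A $ j $ i))"

definition hermitian_mat :: "complex ^ 'n ^ 'n \<Rightarrow> bool" where
  "hermitian_mat A \<longleftrightarrow> adjoint_mat A = A"

definition spec :: "complex ^ 'n ^ 'n \<Rightarrow> complex set" where
  "spec H = {l. \<exists>v. v \<noteq> 0 \<and> H *v v = l *s v}"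

definition eigenspace :: "complex ^ 'n ^ 'n \<Rightarrow> complex \<Rightarrow> (complex ^ 'n) set" where
  "eigenspace H l = {v. H *v v = l *s v}"

definition orth_proj :: "(complex ^ 'n) set \<Rightarrow> complex ^ 'n \<Rightarrow> complex ^ 'n" where
  "orth_proj E f = (THE p. p \<in> E \<and> (\<forall>v\<in>E. cinner v (f - p) = 0))"

definition opnorm2 :: "complex ^ 'n ^ 'n \<Rightarrow> real" where
  "opnorm2 A = onorm (\<lambda>x. A *v x)"

text \<open>Power spectrum of f w.r.t. H: the discrete probability measure on R with mass
  <f, P_l f> at each eigenvalue l (eigenvalues of a Hermitian matrix are real).\<close>
definition power_spectrum :: "complex ^ 'n ^ 'n \<Rightarrow> complex ^ 'n \<Rightarrow> real pmf" where
  "power_spectrum H f = embed_pmf (\<lambda>x::real.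
     if complex_of_real x \<in> spec H
     then Re (cinner f (orth_proj (eigenspace H (complex_of_real x)) f)) else 0)"

definition couplings :: "real pmf \<Rightarrow> real pmf \<Rightarrow> (real \<times> real) pmf set" where
  "couplings \<mu> \<nu> = {\<gamma>. map_pmf fst \<gamma> = \<mu> \<and> map_pmf snd \<gamma> = \<nu>}"

definition W1 :: "real pmf \<Rightarrow> real pmf \<Rightarrow> real" where
  "W1 \<mu> \<nu> = Inf ((\<lambda>\<gamma>. measure_pmf.expectation \<gamma> (\<lambda>(s, t). \<bar>s - t\<bar>)) ` couplings \<mu> \<nu>)"

end

theory Submission
  imports Defs
begin

(* Write P x = eigenproj H x f and P' y = eigenproj H' y f for the spectral projections of f.
   The numbers q x y = Re <P x, P' y> form a signed transport plan between the two power spectra: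
   summing over y gives Re <P x, f> = |P x|^2, and symmetrically over x.  Since
   <P x, (H - H') P' y> = (x - y) <P x, P' y>, its cost is
   sum |q x y| |x - y| <= |H - H'| (sum_x |P x|) (sum_y |P' y|) <= n |H - H'|,
   by Cauchy-Schwarz over the at most n eigenvalues and sum_x |P x|^2 = |f|^2 = 1.
   Finally W1 is bounded by the cost of every signed plan: a negative entry can be cancelled by
   rerouting mass through it, which by the triangle inequality does not increase the cost, so a
   genuine coupling of no larger cost exists. *)

section \<open>Signed transport plans\<close>

lemma cover_negative_entry_by_positive_parts:
  fixes w :: "'a \<Rightarrow> real"
  assumes Y: "finite Y" and y: "y \<in> Y" and "0 \<le> sum w Y" and neg: "w y < 0"
  obtains \<alpha> where "\<And>v. 0 \<le> \<alpha> v" "\<And>v. \<alpha> v \<le> max (w v) 0" "sum \<alpha> Y = - w y"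
proof
  define A where "A = (\<Sum>v\<in>Y. max (w v) 0)"
  have "sum w Y - w y = (\<Sum>v\<in>Y. w v - (if v = y then w v else 0))"
    using Y y by (simp add: sum_subtractf)
  also have "\<dots> \<le> A"
    unfolding A_def by (intro sum_mono) auto
  finally have A: "- w y \<le> A" using \<open>0 \<le> sum w Y\<close> by linarith
  show "0 \<le> max (w v) 0 * (- w y) / A" for v
    using A neg by (intro divide_nonneg_nonneg mult_nonneg_nonneg) auto
  show "max (w v) 0 * (- w y) / A \<le> max (w v) 0" for v
    using A neg mult_left_mono[OF A, of "max (w v) 0"] by (simp add: field_simps)
  show "(\<Sum>v\<in>Y. max (w v) 0 * (- w y) / A) = - w y"
    unfolding sum_divide_distrib[symmetric] sum_distrib_right[symmetric] A_def[symmetric]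
    using A neg by simp
qed

lemma rerouting_cost_le:
  fixes \<alpha> \<beta> :: "'a::metric_space \<Rightarrow> real"
  assumes "0 < t" "sum \<alpha> Y = t" "sum \<beta> X = t" "\<And>v. 0 \<le> \<alpha> v" "\<And>u. 0 \<le> \<beta> u"
  shows "(\<Sum>u\<in>X. \<Sum>v\<in>Y. \<alpha> v * \<beta> u / t * dist u v)
    \<le> (\<Sum>u\<in>X. \<beta> u * dist u y) + t * dist x y + (\<Sum>v\<in>Y. \<alpha> v * dist x v)"
proof -
  have "(\<Sum>u\<in>X. \<Sum>v\<in>Y. \<alpha> v * \<beta> u / t * dist u v)
      \<le> (\<Sum>u\<in>X. \<Sum>v\<in>Y. \<alpha> v * \<beta> u / t * (dist u y + dist x y + dist x v))"
  proof (intro sum_mono mult_left_mono)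
    show "dist u v \<le> dist u y + dist x y + dist x v" for u v
      by (metis add_right_mono dist_commute dist_triangle order.trans)
  qed (use assms in simp)
  also have "\<dots> = (\<Sum>u\<in>X. \<Sum>v\<in>Y. \<beta> u / t * (dist u y + dist x y) * \<alpha> v + \<beta> u / t * (\<alpha> v * dist x v))"
    by (intro sum.cong refl) (simp add: algebra_simps add_divide_distrib)
  also have "\<dots> = (\<Sum>u\<in>X. \<beta> u / t * (dist u y + dist x y) * (\<Sum>v\<in>Y. \<alpha> v)
      + \<beta> u / t * (\<Sum>v\<in>Y. \<alpha> v * dist x v))"
    by (simp only: sum.distrib sum_distrib_left)
  also have "\<dots> = (\<Sum>u\<in>X. \<beta> u * dist u y + dist x y * \<beta> u + (\<Sum>v\<in>Y. \<alpha> v * dist x v) / t * \<beta> u)"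
    using assms by (intro sum.cong refl) (simp add: field_simps)
  also have "\<dots> = (\<Sum>u\<in>X. \<beta> u * dist u y) + t * dist x y + (\<Sum>v\<in>Y. \<alpha> v * dist x v)"
    using assms by (simp add: sum.distrib flip: sum_distrib_left sum_divide_distrib)
  finally show ?thesis .
qed

lemma rerouting_does_not_increase_cost:
  fixes q q' :: "'a::metric_space \<Rightarrow> 'a \<Rightarrow> real"
  assumes X: "finite X" and Y: "finite Y" and x: "x \<in> X" and y: "y \<in> Y"
    and t: "0 < t" and sum_\<alpha>: "sum \<alpha> Y = t" and sum_\<beta>: "sum \<beta> X = t"
    and \<alpha>: "\<And>v. 0 \<le> \<alpha> v" and \<beta>: "\<And>u. 0 \<le> \<beta> u"
    and abs_q': "\<And>u v. \<bar>q' u v\<bar> \<le> \<bar>q u v\<bar> + \<alpha> v * \<beta> u / t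
      - (if u = x \<and> v = y then t else 0) - (if u = x then \<alpha> v else 0) - (if v = y then \<beta> u else 0)"
  shows "(\<Sum>u\<in>X. \<Sum>v\<in>Y. \<bar>q' u v\<bar> * dist u v) \<le> (\<Sum>u\<in>X. \<Sum>v\<in>Y. \<bar>q u v\<bar> * dist u v)"
proof -
  have "\<bar>q' u v\<bar> * dist u v \<le> \<bar>q u v\<bar> * dist u v + \<alpha> v * \<beta> u / t * dist u v
      - (if u = x \<and> v = y then t * dist x y else 0)
      - (if u = x then \<alpha> v * dist x v else 0) - (if v = y then \<beta> u * dist u y else 0)" for u v
    using mult_right_mono[OF abs_q'[of u v] zero_le_dist[of u v]]
    by (cases "u = x"; cases "v = y") (simp_all add: algebra_simps)
  then have "(\<Sum>u\<in>X. \<Sum>v\<in>Y. \<bar>q' u v\<bar> * dist u v) \<le> (\<Sum>u\<in>X. \<Sum>v\<in>Y. \<bar>q u v\<bar> * dist u v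
      + \<alpha> v * \<beta> u / t * dist u v - (if u = x \<and> v = y then t * dist x y else 0)
      - (if u = x then \<alpha> v * dist x v else 0) - (if v = y then \<beta> u * dist u y else 0))"
    by (intro sum_mono)
  also have "\<dots> = (\<Sum>u\<in>X. \<Sum>v\<in>Y. \<bar>q u v\<bar> * dist u v) + (\<Sum>u\<in>X. \<Sum>v\<in>Y. \<alpha> v * \<beta> u / t * dist u v)
      - t * dist x y - (\<Sum>v\<in>Y. \<alpha> v * dist x v) - (\<Sum>u\<in>X. \<beta> u * dist u y)"
  proof -
    have "(\<Sum>v\<in>Y. if u = x \<and> v = y then t * dist x y else 0) = (if u = x then t * dist x y else 0)"
      and "(\<Sum>v\<in>Y. if u = x then \<alpha> v * dist x v else 0) = (if u = x then \<Sum>v\<in>Y. \<alpha> v * dist x v else 0)"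
      for u using Y y by (cases "u = x"; simp)+
    with X Y x y show ?thesis by (simp add: sum.distrib sum_subtractf)
  qed
  also have "\<dots> \<le> (\<Sum>u\<in>X. \<Sum>v\<in>Y. \<bar>q u v\<bar> * dist u v)"
    using rerouting_cost_le[OF t sum_\<alpha> sum_\<beta> \<alpha> \<beta>, where x = x and y = y] by simp
  finally show ?thesis .
qed

lemma signed_plan_cancel_negative_entry:
  fixes q :: "'a::metric_space \<Rightarrow> 'a \<Rightarrow> real"
  assumes X: "finite X" and Y: "finite Y"
    and rows: "\<And>u. u \<in> X \<Longrightarrow> 0 \<le> (\<Sum>v\<in>Y. q u v)"
    and cols: "\<And>v. v \<in> Y \<Longrightarrow> 0 \<le> (\<Sum>u\<in>X. q u v)"
    and x: "x \<in> X" and y: "y \<in> Y" and neg: "q x y < 0"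
  obtains q' where
    "\<And>u. u \<in> X \<Longrightarrow> (\<Sum>v\<in>Y. q' u v) = (\<Sum>v\<in>Y. q u v)"
    "\<And>v. v \<in> Y \<Longrightarrow> (\<Sum>u\<in>X. q' u v) = (\<Sum>u\<in>X. q u v)"
    "{(u, v) \<in> X \<times> Y. q' u v < 0} \<subseteq> {(u, v) \<in> X \<times> Y. q u v < 0} - {(x, y)}"
    "(\<Sum>u\<in>X. \<Sum>v\<in>Y. \<bar>q' u v\<bar> * dist u v) \<le> (\<Sum>u\<in>X. \<Sum>v\<in>Y. \<bar>q u v\<bar> * dist u v)"
proof -
  define t where "t = - q x y"
  have t: "0 < t" using neg by (simp add: t_def)
  obtain \<alpha> where \<alpha>: "\<And>v. 0 \<le> \<alpha> v" "\<And>v. \<alpha> v \<le> max (q x v) 0" and sum_\<alpha>: "(\<Sum>v\<in>Y. \<alpha> v) = t"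
    using cover_negative_entry_by_positive_parts[OF Y y rows[OF x] neg] unfolding t_def by blast
  obtain \<beta> where \<beta>: "\<And>u. 0 \<le> \<beta> u" "\<And>u. \<beta> u \<le> max (q u y) 0" and sum_\<beta>: "(\<Sum>u\<in>X. \<beta> u) = t"
    using cover_negative_entry_by_positive_parts[where w = "\<lambda>u. q u y", OF X x cols[OF y]] neg
    unfolding t_def by blast
  have \<alpha>y: "\<alpha> y = 0" and \<beta>x: "\<beta> x = 0"
    using \<alpha>[of y] \<beta>[of x] neg by simp_all
  have \<alpha>\<beta>: "0 \<le> \<alpha> v * \<beta> u / t" for u v
    using \<alpha> \<beta> t by simp
  \<comment> \<open>Removing \<alpha> from row x and \<beta> from column y fixes the entry (x, y); the rank-one term
     restores the marginals of all other rows and columns.\<close>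
  define q' where "q' u v = q u v + (if u = x \<and> v = y then t else 0)
      - (if u = x then \<alpha> v else 0) - (if v = y then \<beta> u else 0) + \<alpha> v * \<beta> u / t" for u v
  have abs_q': "\<bar>q' u v\<bar> \<le> \<bar>q u v\<bar> + \<alpha> v * \<beta> u / t
      - (if u = x \<and> v = y then t else 0) - (if u = x then \<alpha> v else 0) - (if v = y then \<beta> u else 0)" for u v
  proof (cases "u = x"; cases "v = y")
    assume "u \<noteq> x" "v \<noteq> y"
    then show ?thesis using \<alpha>\<beta>[of v u] by (simp add: q'_def abs_triangle_ineq)
  qed (use neg \<alpha>[of v] \<beta>[of u] \<alpha>y \<beta>x in \<open>auto simp: q'_def t_def\<close>)
  show ?thesis
  proof
    fix u assume "u \<in> X"
    have "(\<Sum>v\<in>Y. q' u v) = (\<Sum>v\<in>Y. q u v) + (\<Sum>v\<in>Y. if u = x \<and> v = y then t else 0)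
        - (\<Sum>v\<in>Y. if u = x then \<alpha> v else 0) - (\<Sum>v\<in>Y. if v = y then \<beta> u else 0)
        + (\<Sum>v\<in>Y. \<alpha> v) * \<beta> u / t"
      by (simp add: q'_def sum.distrib sum_subtractf sum_divide_distrib sum_distrib_right)
    then show "(\<Sum>v\<in>Y. q' u v) = (\<Sum>v\<in>Y. q u v)"
      using Y y t by (cases "u = x") (simp_all add: sum_\<alpha>)
  next
    fix v assume "v \<in> Y"
    have "(\<Sum>u\<in>X. q' u v) = (\<Sum>u\<in>X. q u v) + (\<Sum>u\<in>X. if u = x \<and> v = y then t else 0)
        - (\<Sum>u\<in>X. if u = x then \<alpha> v else 0) - (\<Sum>u\<in>X. if v = y then \<beta> u else 0)
        + \<alpha> v * (\<Sum>u\<in>X. \<beta> u) / t"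
      by (simp add: q'_def sum.distrib sum_subtractf sum_divide_distrib sum_distrib_left)
    then show "(\<Sum>u\<in>X. q' u v) = (\<Sum>u\<in>X. q u v)"
      using X x t by (cases "v = y") (simp_all add: sum_\<beta>)
  next
    have "q u v < 0 \<and> (u, v) \<noteq> (x, y)" if "q' u v < 0" for u v
      using that \<alpha>\<beta>[of v u] \<alpha>[of v] \<beta>[of u] \<alpha>y \<beta>x
      by (auto simp: q'_def t_def split: if_splits)
    then show "{(u, v) \<in> X \<times> Y. q' u v < 0} \<subseteq> {(u, v) \<in> X \<times> Y. q u v < 0} - {(x, y)}"
      by blast
  next
    show "(\<Sum>u\<in>X. \<Sum>v\<in>Y. \<bar>q' u v\<bar> * dist u v) \<le> (\<Sum>u\<in>X. \<Sum>v\<in>Y. \<bar>q u v\<bar> * dist u v)"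
      using X Y x y t sum_\<alpha> sum_\<beta> \<alpha>(1) \<beta>(1) abs_q' by (rule rerouting_does_not_increase_cost)
  qed
qed

lemma nonneg_plan_from_signed_plan:
  fixes q :: "'a::metric_space \<Rightarrow> 'a \<Rightarrow> real"
  assumes X: "finite X" and Y: "finite Y"
    and "\<And>u. u \<in> X \<Longrightarrow> 0 \<le> (\<Sum>v\<in>Y. q u v)" and "\<And>v. v \<in> Y \<Longrightarrow> 0 \<le> (\<Sum>u\<in>X. q u v)"
  shows "\<exists>g. (\<forall>u\<in>X. \<forall>v\<in>Y. 0 \<le> g u v)
    \<and> (\<forall>u\<in>X. (\<Sum>v\<in>Y. g u v) = (\<Sum>v\<in>Y. q u v)) \<and> (\<forall>v\<in>Y. (\<Sum>u\<in>X. g u v) = (\<Sum>u\<in>X. q u v))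
    \<and> (\<Sum>u\<in>X. \<Sum>v\<in>Y. g u v * dist u v) \<le> (\<Sum>u\<in>X. \<Sum>v\<in>Y. \<bar>q u v\<bar> * dist u v)"
  using assms(3,4)
proof (induction "card {(u, v) \<in> X \<times> Y. q u v < 0}" arbitrary: q rule: less_induct)
  case less
  show ?case
  proof (cases "\<exists>x\<in>X. \<exists>y\<in>Y. q x y < 0")
    case False
    then have "(\<Sum>u\<in>X. \<Sum>v\<in>Y. q u v * dist u v) = (\<Sum>u\<in>X. \<Sum>v\<in>Y. \<bar>q u v\<bar> * dist u v)"
      by (intro sum.cong refl) (simp add: not_less)
    with False show ?thesis by (intro exI[of _ q]) (simp add: not_less)
  next
    case True
    then obtain x y where x: "x \<in> X" and y: "y \<in> Y" and neg: "q x y < 0" by blast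
    obtain q' where rows: "\<And>u. u \<in> X \<Longrightarrow> (\<Sum>v\<in>Y. q' u v) = (\<Sum>v\<in>Y. q u v)"
      and cols: "\<And>v. v \<in> Y \<Longrightarrow> (\<Sum>u\<in>X. q' u v) = (\<Sum>u\<in>X. q u v)"
      and negs: "{(u, v) \<in> X \<times> Y. q' u v < 0} \<subseteq> {(u, v) \<in> X \<times> Y. q u v < 0} - {(x, y)}"
      and cost: "(\<Sum>u\<in>X. \<Sum>v\<in>Y. \<bar>q' u v\<bar> * dist u v) \<le> (\<Sum>u\<in>X. \<Sum>v\<in>Y. \<bar>q u v\<bar> * dist u v)"
      using signed_plan_cancel_negative_entry[OF X Y less.prems x y neg] by blast
    have "card {(u, v) \<in> X \<times> Y. q' u v < 0} < card {(u, v) \<in> X \<times> Y. q u v < 0}"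
    proof (rule psubset_card_mono)
      show "finite {(u, v) \<in> X \<times> Y. q u v < 0}"
        using X Y by (rule finite_subset[rotated, OF finite_cartesian_product]) auto
    qed (use negs x y neg in auto)
    from less.hyps[OF this] obtain g where "\<forall>u\<in>X. \<forall>v\<in>Y. 0 \<le> g u v"
      "\<forall>u\<in>X. (\<Sum>v\<in>Y. g u v) = (\<Sum>v\<in>Y. q' u v)" "\<forall>v\<in>Y. (\<Sum>u\<in>X. g u v) = (\<Sum>u\<in>X. q' u v)"
      "(\<Sum>u\<in>X. \<Sum>v\<in>Y. g u v * dist u v) \<le> (\<Sum>u\<in>X. \<Sum>v\<in>Y. \<bar>q' u v\<bar> * dist u v)"
      using less.prems rows cols by force
    with rows cols cost show ?thesis by (intro exI[of _ g]) auto
  qed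
qed

lemma pmf_embed_pmf_finite_support:
  fixes g :: "'a \<Rightarrow> real"
  assumes "finite A" "\<And>x. 0 \<le> g x" "\<And>x. x \<notin> A \<Longrightarrow> g x = 0" "sum g A = 1"
  shows "pmf (embed_pmf g) x = g x"
proof (rule pmf_embed_pmf)
  have "(\<integral>\<^sup>+ x. ennreal (g x) \<partial>count_space UNIV) = (\<Sum>x\<in>A. ennreal (g x))"
    using assms by (intro nn_integral_count_space') auto
  also have "\<dots> = 1" using assms by (simp add: sum_ennreal)
  finally show "(\<integral>\<^sup>+ x. ennreal (g x) \<partial>count_space UNIV) = 1" .
qed (use assms in auto)

lemma coupling_from_plan:
  fixes \<mu> \<nu> :: "real pmf" and g :: "real \<Rightarrow> real \<Rightarrow> real"
  assumes X: "finite X" and Y: "finite Y" and "set_pmf \<mu> \<subseteq> X" "set_pmf \<nu> \<subseteq> Y"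
    and nonneg: "\<And>u v. u \<in> X \<Longrightarrow> v \<in> Y \<Longrightarrow> 0 \<le> g u v"
    and rows: "\<And>u. u \<in> X \<Longrightarrow> (\<Sum>v\<in>Y. g u v) = pmf \<mu> u"
    and cols: "\<And>v. v \<in> Y \<Longrightarrow> (\<Sum>u\<in>X. g u v) = pmf \<nu> v"
  obtains \<gamma> where "\<gamma> \<in> couplings \<mu> \<nu>" "set_pmf \<gamma> \<subseteq> X \<times> Y" "\<And>u v. u \<in> X \<Longrightarrow> v \<in> Y \<Longrightarrow> pmf \<gamma> (u, v) = g u v"
proof
  define h where "h p = (if p \<in> X \<times> Y then g (fst p) (snd p) else 0)" for p
  define \<gamma> where "\<gamma> = embed_pmf h"
  have "sum h (X \<times> Y) = (\<Sum>u\<in>X. \<Sum>v\<in>Y. g u v)"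
    by (simp add: h_def sum.cartesian_product split_beta)
  also have "\<dots> = 1" using rows assms(1,3) by (simp add: sum_pmf_eq_1)
  finally have pmf_\<gamma>: "pmf \<gamma> p = h p" for p
    unfolding \<gamma>_def using X Y nonneg by (intro pmf_embed_pmf_finite_support[of "X \<times> Y"]) (auto simp: h_def)
  then show "pmf \<gamma> (u, v) = g u v" if "u \<in> X" "v \<in> Y" for u v
    using that by (simp add: h_def)
  show set_\<gamma>: "set_pmf \<gamma> \<subseteq> X \<times> Y"
    by (auto simp: set_pmf_iff pmf_\<gamma> h_def split: if_splits)
  have prob_\<gamma>: "measure_pmf.prob \<gamma> A = sum h (A \<inter> (X \<times> Y))" for A
  proof -
    have "measure_pmf.prob \<gamma> A = measure_pmf.prob \<gamma> (A \<inter> set_pmf \<gamma>)"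
      by (simp add: measure_Int_set_pmf)
    also have "A \<inter> set_pmf \<gamma> = (A \<inter> (X \<times> Y)) \<inter> set_pmf \<gamma>"
      using set_\<gamma> by blast
    also have "measure_pmf.prob \<gamma> \<dots> = measure_pmf.prob \<gamma> (A \<inter> (X \<times> Y))"
      by (simp add: measure_Int_set_pmf)
    also have "\<dots> = sum h (A \<inter> (X \<times> Y))"
      using X Y by (simp add: measure_measure_pmf_finite pmf_\<gamma>)
    finally show ?thesis .
  qed
  have "map_pmf fst \<gamma> = \<mu>"
  proof (rule pmf_eqI)
    fix u
    have "fst -` {u} \<inter> (X \<times> Y) = (if u \<in> X then Pair u ` Y else {})" by auto
    then show "pmf (map_pmf fst \<gamma>) u = pmf \<mu> u"
      using rows assms(3) by (auto simp: pmf_map prob_\<gamma> sum.reindex inj_on_def h_def set_pmf_iff)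
  qed
  moreover have "map_pmf snd \<gamma> = \<nu>"
  proof (rule pmf_eqI)
    fix v
    have "snd -` {v} \<inter> (X \<times> Y) = (if v \<in> Y then (\<lambda>u. (u, v)) ` X else {})" by auto
    then show "pmf (map_pmf snd \<gamma>) v = pmf \<nu> v"
      using cols assms(4) by (auto simp: pmf_map prob_\<gamma> sum.reindex inj_on_def h_def set_pmf_iff)
  qed
  ultimately show "\<gamma> \<in> couplings \<mu> \<nu>" by (simp add: couplings_def)
qed

lemma W1_le_plan_cost:
  fixes \<mu> \<nu> :: "real pmf" and g :: "real \<Rightarrow> real \<Rightarrow> real"
  assumes X: "finite X" and Y: "finite Y" and "set_pmf \<mu> \<subseteq> X" "set_pmf \<nu> \<subseteq> Y"
    and "\<And>u v. u \<in> X \<Longrightarrow> v \<in> Y \<Longrightarrow> 0 \<le> g u v"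
    and "\<And>u. u \<in> X \<Longrightarrow> (\<Sum>v\<in>Y. g u v) = pmf \<mu> u"
    and "\<And>v. v \<in> Y \<Longrightarrow> (\<Sum>u\<in>X. g u v) = pmf \<nu> v"
  shows "W1 \<mu> \<nu> \<le> (\<Sum>u\<in>X. \<Sum>v\<in>Y. g u v * dist u v)"
proof -
  obtain \<gamma> where \<gamma>: "\<gamma> \<in> couplings \<mu> \<nu>" and set_\<gamma>: "set_pmf \<gamma> \<subseteq> X \<times> Y"
    and pmf_\<gamma>: "\<And>u v. u \<in> X \<Longrightarrow> v \<in> Y \<Longrightarrow> pmf \<gamma> (u, v) = g u v"
    using coupling_from_plan[OF assms] by blast
  have "W1 \<mu> \<nu> \<le> measure_pmf.expectation \<gamma> (\<lambda>(s, t). \<bar>s - t\<bar>)"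
    unfolding W1_def using \<gamma> by (intro cInf_lower imageI bdd_belowI[where m = 0]) (auto simp: split_beta)
  also have "\<dots> = (\<Sum>p\<in>X \<times> Y. \<bar>fst p - snd p\<bar> * pmf \<gamma> p)"
    using X Y set_\<gamma> by (subst integral_measure_pmf_real[where A = "X \<times> Y"]) (auto simp: split_beta)
  also have "\<dots> = (\<Sum>u\<in>X. \<Sum>v\<in>Y. g u v * dist u v)"
    unfolding sum.cartesian_product by (intro sum.cong refl) (auto simp: pmf_\<gamma> dist_real_def)
  finally show ?thesis .
qed

lemma W1_le_signed_plan_cost:
  fixes \<mu> \<nu> :: "real pmf" and q :: "real \<Rightarrow> real \<Rightarrow> real"
  assumes X: "finite X" and Y: "finite Y" and "set_pmf \<mu> \<subseteq> X" "set_pmf \<nu> \<subseteq> Y"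
    and rows: "\<And>u. u \<in> X \<Longrightarrow> (\<Sum>v\<in>Y. q u v) = pmf \<mu> u"
    and cols: "\<And>v. v \<in> Y \<Longrightarrow> (\<Sum>u\<in>X. q u v) = pmf \<nu> v"
  shows "W1 \<mu> \<nu> \<le> (\<Sum>u\<in>X. \<Sum>v\<in>Y. \<bar>q u v\<bar> * dist u v)"
proof -
  have "\<And>u. u \<in> X \<Longrightarrow> 0 \<le> (\<Sum>v\<in>Y. q u v)" "\<And>v. v \<in> Y \<Longrightarrow> 0 \<le> (\<Sum>u\<in>X. q u v)"
    by (simp_all add: rows cols)
  from nonneg_plan_from_signed_plan[OF X Y this] obtain g where "\<forall>u\<in>X. \<forall>v\<in>Y. 0 \<le> g u v"
    "\<forall>u\<in>X. (\<Sum>v\<in>Y. g u v) = pmf \<mu> u" "\<forall>v\<in>Y. (\<Sum>u\<in>X. g u v) = pmf \<nu> v"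
    and cost: "(\<Sum>u\<in>X. \<Sum>v\<in>Y. g u v * dist u v) \<le> (\<Sum>u\<in>X. \<Sum>v\<in>Y. \<bar>q u v\<bar> * dist u v)"
    by (auto simp: rows cols)
  then have "W1 \<mu> \<nu> \<le> (\<Sum>u\<in>X. \<Sum>v\<in>Y. g u v * dist u v)"
    by (intro W1_le_plan_cost[OF assms(1-4)]) auto
  with cost show ?thesis by linarith
qed

section \<open>The complex inner product\<close>

lemma Re_cinner: "Re (cinner x y) = x \<bullet> y"
  unfolding cinner_def inner_vec_def by (simp add: inner_complex_def)

lemma cinner_zero_right [simp]: "cinner x 0 = 0"
  unfolding cinner_def by simp

lemma cinner_add_right: "cinner x (y + z) = cinner x y + cinner x z"
  unfolding cinner_def by (simp add: distrib_left sum.distrib)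

lemma cinner_diff_right: "cinner x (y - z) = cinner x y - cinner x z"
  unfolding cinner_def by (simp add: right_diff_distrib sum_subtractf)

lemma cinner_scale_left: "cinner (c *s x) y = cnj c * cinner x y"
  unfolding cinner_def by (simp add: sum_distrib_left algebra_simps)

lemma cinner_scale_right: "cinner x (c *s y) = c * cinner x y"
  unfolding cinner_def by (simp add: sum_distrib_left algebra_simps)

lemma cinner_sum_right: "cinner x (\<Sum>i\<in>A. f i) = (\<Sum>i\<in>A. cinner x (f i))"
  by (induction A rule: infinite_finite_induct) (auto simp: cinner_add_right)

lemma cinner_self: "cinner x x = complex_of_real ((norm x)\<^sup>2)"
proof -
  have "(norm x)\<^sup>2 = (\<Sum>i\<in>UNIV. (cmod (x $ i))\<^sup>2)"
    unfolding norm_vec_def L2_set_def by (simp add: sum_nonneg)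
  then show ?thesis
    unfolding cinner_def by (simp add: mult.commute flip: complex_norm_square)
qed

lemma cinner_self_eq_0 [simp]: "cinner x x = 0 \<longleftrightarrow> x = 0"
  by (simp add: cinner_self)

lemma cinner_eq_0_iff_inner:
  "cinner x y = 0 \<longleftrightarrow> x \<bullet> y = 0 \<and> (\<i> *s x) \<bullet> y = 0"
  by (simp add: complex_eq_iff cinner_scale_left flip: Re_cinner)

lemma scaleR_eq_of_real_scale: "r *\<^sub>R x = complex_of_real r *s (x :: complex ^ 'n)"
  by (simp add: vec_eq_iff) (simp add: scaleR_conv_of_real)

lemma vec_subspace_imp_subspace: "vec.subspace (S :: (complex ^ 'n) set) \<Longrightarrow> subspace S"
  unfolding subspace_def vec.subspace_def by (simp add: scaleR_eq_of_real_scale)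

lemma orth_proj:
  assumes E: "vec.subspace E"
  shows "orth_proj E f \<in> E" "\<And>v. v \<in> E \<Longrightarrow> cinner v (f - orth_proj E f) = 0"
proof -
  have span_E: "span E = E"
    using vec_subspace_imp_subspace[OF E] by (simp add: span_eq_iff)
  obtain p z where p: "p \<in> E" and z: "\<And>w. w \<in> E \<Longrightarrow> orthogonal z w" and f: "f = p + z"
    using orthogonal_subspace_decomp_exists[of E f] unfolding span_E by blast
  have p_orth: "cinner v (f - p) = 0" if "v \<in> E" for v
    using z[OF that] z[OF vec.subspace_scale[OF E that, of \<i>]] f
    by (simp add: cinner_eq_0_iff_inner orthogonal_def inner_commute)
  have "p' = p" if "p' \<in> E" "\<forall>v\<in>E. cinner v (f - p') = 0" for p'
  proof -
    have "p' - p \<in> E" using E that(1) p by (rule vec.subspace_diff)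
    then have "cinner (p' - p) (f - p) - cinner (p' - p) (f - p') = 0"
      using that(2) p_orth by simp
    then have "cinner (p' - p) (p' - p) = 0" by (simp add: cinner_diff_right)
    then show ?thesis by simp
  qed
  with p p_orth have "\<exists>!p. p \<in> E \<and> (\<forall>v\<in>E. cinner v (f - p) = 0)" by blast
  from theI'[OF this] show "orth_proj E f \<in> E" "\<And>v. v \<in> E \<Longrightarrow> cinner v (f - orth_proj E f) = 0"
    unfolding orth_proj_def by blast+
qed

lemma inner_orth_proj_self:
  assumes "vec.subspace E"
  shows "f \<bullet> orth_proj E f = (norm (orth_proj E f))\<^sup>2"
proof -
  have "orth_proj E f \<bullet> (f - orth_proj E f) = 0"
    using orth_proj[OF assms] by (simp add: cinner_eq_0_iff_inner)
  then show ?thesis by (simp add: inner_diff_right inner_commute power2_norm_eq_inner)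
qed

section \<open>Spectral resolution of Hermitian matrices\<close>

lemma cinner_matrix_vector_mult: "cinner x (A *v y) = cinner (adjoint_mat A *v x) y"
proof -
  have "cinner x (A *v y) = (\<Sum>i\<in>UNIV. \<Sum>j\<in>UNIV. cnj (x $ i) * (A $ i $ j * y $ j))"
    unfolding cinner_def matrix_vector_mult_def by (simp add: sum_distrib_left)
  also have "\<dots> = (\<Sum>j\<in>UNIV. \<Sum>i\<in>UNIV. cnj (x $ i) * (A $ i $ j * y $ j))"
    by (rule sum.swap)
  also have "\<dots> = cinner (adjoint_mat A *v x) y"
    unfolding cinner_def matrix_vector_mult_def adjoint_mat_def
    by (simp add: sum_distrib_right sum_distrib_left algebra_simps)
  finally show ?thesis .
qed

lemma hermitian_cinner_swap: "hermitian_mat H \<Longrightarrow> cinner x (H *v y) = cinner (H *v x) y"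
  by (simp add: cinner_matrix_vector_mult hermitian_mat_def)

lemma hermitian_inner_swap: "hermitian_mat H \<Longrightarrow> x \<bullet> (H *v y) = (H *v x) \<bullet> y"
  by (simp add: hermitian_cinner_swap flip: Re_cinner)

lemma nonpos_if_quadratic_nonpos:
  fixes a Q :: real
  assumes "\<And>t. 0 < t \<Longrightarrow> 2 * t * a + t\<^sup>2 * Q \<le> 0"
  shows "a \<le> 0"
proof -
  have "2 * a \<le> 0 + e" if "0 < e" for e
  proof -
    define t where "t = e / (\<bar>Q\<bar> + 1)"
    have t: "0 < t" "t * \<bar>Q\<bar> \<le> e"
      using that by (simp_all add: t_def field_simps)
    have "t * (2 * a) \<le> t * (- t * Q)"
      using assms[OF t(1)] by (simp add: power2_eq_square algebra_simps)
    then have "2 * a \<le> - t * Q" using t(1) by (rule mult_left_le_imp_le)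
    also have "\<dots> \<le> e" using t(2) abs_ge_minus_self[of Q] mult_left_mono[of "- Q" "\<bar>Q\<bar>" t] t(1) by simp
    finally show ?thesis by simp
  qed
  then have "2 * a \<le> 0" by (rule field_le_epsilon)
  then show ?thesis by simp
qed

lemma self_adjoint_eigenvector_in_invariant_subspace:
  fixes T :: "'a::euclidean_space \<Rightarrow> 'a"
  assumes lin: "linear T" and self_adj: "\<And>x y. x \<bullet> T y = T x \<bullet> y"
    and W: "subspace W" and inv: "\<And>w. w \<in> W \<Longrightarrow> T w \<in> W" and w: "w \<in> W" "w \<noteq> 0"
  obtains v c where "v \<in> W" "v \<noteq> 0" "T v = c *\<^sub>R v"
proof -
  let ?K = "sphere 0 1 \<inter> W"
  have "compact ?K" by (rule compact_Int_closed[OF compact_sphere closed_subspace[OF W]])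
  moreover have "w /\<^sub>R norm w \<in> ?K" using w W by (simp add: subspace_scale)
  moreover have "continuous_on ?K (\<lambda>x. x \<bullet> T x)"
    using lin by (intro continuous_intros linear_continuous_on) (simp add: linear_conv_bounded_linear)
  ultimately obtain v where v: "v \<in> ?K" and v_max: "\<And>y. y \<in> ?K \<Longrightarrow> y \<bullet> T y \<le> v \<bullet> T v"
    using continuous_attains_sup[of ?K "\<lambda>x. x \<bullet> T x"] by blast
  define m where "m = v \<bullet> T v"
  have vW: "v \<in> W" and vv: "v \<bullet> v = 1" using v by (auto simp: norm_eq_1)
  have rayleigh: "x \<bullet> T x \<le> m * (x \<bullet> x)" if "x \<in> W" for x
  proof (cases "x = 0")
    case True then show ?thesis using linear_0[OF lin] by simp
  next
    case False
    have "(x /\<^sub>R norm x) \<bullet> T (x /\<^sub>R norm x) \<le> m"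
      unfolding m_def using False that W by (intro v_max) (simp add: subspace_scale)
    then show ?thesis
      using False by (simp add: linear_scale[OF lin] field_simps power2_eq_square flip: power2_norm_eq_inner)
  qed
  \<comment> \<open>v maximises the Rayleigh quotient on W; the first-order condition along u forces u = 0.\<close>
  define u where "u = T v - m *\<^sub>R v"
  have uW: "u \<in> W" unfolding u_def using inv[OF vW] vW W by (simp add: subspace_diff subspace_scale)
  have "2 * t * (u \<bullet> u) + t\<^sup>2 * (u \<bullet> T u - m * (u \<bullet> u)) \<le> 0" for t
  proof -
    have "v + t *\<^sub>R u \<in> W" using vW uW W by (simp add: subspace_add subspace_scale)
    from rayleigh[OF this] have "m + 2 * t * (u \<bullet> T v) + t\<^sup>2 * (u \<bullet> T u)
        \<le> m * (1 + 2 * t * (v \<bullet> u) + t\<^sup>2 * (u \<bullet> u))"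
      using self_adj[of v u] vv
      by (simp add: linear_add[OF lin] linear_scale[OF lin] inner_add_left inner_add_right
          inner_commute[of "T v"] inner_commute[of u v] m_def power2_eq_square algebra_simps)
    moreover have "u \<bullet> T v - m * (v \<bullet> u) = u \<bullet> u"
      by (simp add: u_def inner_diff_left inner_diff_right inner_commute algebra_simps)
    ultimately show ?thesis by (simp add: algebra_simps)
  qed
  then have "u \<bullet> u \<le> 0" by (rule nonpos_if_quadratic_nonpos)
  then have "u = 0" by (metis inner_eq_zero_iff inner_ge_zero order_antisym)
  then have "T v = m *\<^sub>R v" by (simp add: u_def)
  moreover have "v \<noteq> 0" using vv by auto
  ultimately show ?thesis using vW that by blast
qed

lemma eigenspace_of_real_iff: "v \<in> eigenspace H (complex_of_real x) \<longleftrightarrow> H *v v = x *\<^sub>R v"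
  by (simp add: eigenspace_def scaleR_eq_of_real_scale)

lemma vec_subspace_eigenspace: "vec.subspace (eigenspace H l)"
  unfolding vec.subspace_def eigenspace_def
  by (simp add: vec.scale vec.add matrix_vector_mult_0_right vector_space_assms(2))

lemma hermitian_eigenvectors_orthogonal:
  assumes H: "hermitian_mat H" and v: "H *v v = x *\<^sub>R v" and w: "H *v w = y *\<^sub>R w" and "x \<noteq> y"
  shows "cinner v w = 0"
proof -
  have "complex_of_real y * cinner v w = complex_of_real x * cinner v w"
    using hermitian_cinner_swap[OF H, of v w] v w
    by (simp add: scaleR_eq_of_real_scale cinner_scale_left cinner_scale_right)
  then show ?thesis using \<open>x \<noteq> y\<close> by simp
qed

lemma vec_independent_if_cinner_orthogonal:
  assumes "0 \<notin> S" and orth: "\<And>v w. v \<in> S \<Longrightarrow> w \<in> S \<Longrightarrow> v \<noteq> w \<Longrightarrow> cinner v w = 0"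
  shows "vec.independent (S :: (complex ^ 'n) set)"
  unfolding vec.independent_explicit_module
proof clarify
  fix T c w
  assume T: "finite T" "T \<subseteq> S" and comb: "(\<Sum>v\<in>T. c v *s v) = 0" and w: "w \<in> T"
  have "0 = cinner w (\<Sum>v\<in>T. c v *s v)" by (simp add: comb)
  also have "\<dots> = (\<Sum>v\<in>T. c v * cinner w v)"
    by (simp add: cinner_sum_right cinner_scale_right)
  also have "\<dots> = (\<Sum>v\<in>T. if v = w then c w * cinner w w else 0)"
    using T w orth by (intro sum.cong refl) auto
  also have "\<dots> = c w * cinner w w" using T w by simp
  finally show "c w = 0" using assms(1) T w by auto
qed

(* Eigenvalues of a Hermitian matrix are real, but power_spectrum only looks at real points, so
   the real part of the spectrum is all that is ever needed. *)

definition real_spec :: "complex ^ 'n ^ 'n \<Rightarrow> real set" where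
  "real_spec H = {x. complex_of_real x \<in> spec H}"

definition eigenproj :: "complex ^ 'n ^ 'n \<Rightarrow> real \<Rightarrow> complex ^ 'n \<Rightarrow> complex ^ 'n" where
  "eigenproj H x = orth_proj (eigenspace H (complex_of_real x))"

lemma real_spec_iff: "x \<in> real_spec H \<longleftrightarrow> (\<exists>v. v \<noteq> 0 \<and> H *v v = x *\<^sub>R v)"
  by (simp add: real_spec_def spec_def scaleR_eq_of_real_scale)

lemma eigenproj_eigenvector: "H *v eigenproj H x f = x *\<^sub>R eigenproj H x f"
  using orth_proj(1)[OF vec_subspace_eigenspace, of H "complex_of_real x" f]
  unfolding eigenproj_def eigenspace_of_real_iff .

lemma finite_real_spec_card_le:
  fixes H :: "complex ^ 'n ^ 'n"
  assumes H: "hermitian_mat H"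
  shows "finite (real_spec H)" "card (real_spec H) \<le> CARD('n)"
proof -
  have "\<forall>x\<in>real_spec H. \<exists>v. v \<noteq> 0 \<and> H *v v = x *\<^sub>R v"
    by (simp add: real_spec_iff)
  then obtain e where e: "\<forall>x\<in>real_spec H. e x \<noteq> 0 \<and> H *v e x = x *\<^sub>R e x"
    by (rule bchoice[elim_format]) blast
  have inj: "inj_on e (real_spec H)"
  proof (rule inj_onI)
    fix x y assume x: "x \<in> real_spec H" and y: "y \<in> real_spec H" and exy: "e x = e y"
    have "x *\<^sub>R e x = y *\<^sub>R e x" using e x y exy by metis
    then have "(x - y) *\<^sub>R e x = 0" by (simp add: scaleR_diff_left)
    then show "x = y" using e x by simp
  qed
  have "vec.independent (e ` real_spec H)"
  proof (rule vec_independent_if_cinner_orthogonal)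
    show "0 \<notin> e ` real_spec H" using e by auto
    fix v w assume "v \<in> e ` real_spec H" "w \<in> e ` real_spec H" "v \<noteq> w"
    then obtain x y where "x \<in> real_spec H" "y \<in> real_spec H" "v = e x" "w = e y" "x \<noteq> y" by auto
    then show "cinner v w = 0" using e by (auto intro: hermitian_eigenvectors_orthogonal[OF H])
  qed
  from vec.independent_bound_general[OF this]
  have "finite (e ` real_spec H)" "card (e ` real_spec H) \<le> CARD('n)"
    using dim_subset_UNIV_cart_gen[of "e ` real_spec H"] by simp_all
  then show "finite (real_spec H)" "card (real_spec H) \<le> CARD('n)"
    using inj by (simp_all add: finite_image_iff card_image)
qed

lemma hermitian_sum_eigenproj:
  assumes H: "hermitian_mat H"
  shows "(\<Sum>x\<in>real_spec H. eigenproj H x f) = f"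
proof -
  have fin: "finite (real_spec H)" using finite_real_spec_card_le[OF H] by simp
  define W where "W = {w. \<forall>x\<in>real_spec H. \<forall>v. H *v v = x *\<^sub>R v \<longrightarrow> v \<bullet> w = 0}"
  define g where "g = f - (\<Sum>x\<in>real_spec H. eigenproj H x f)"
  have "g \<in> W" unfolding W_def
  proof (intro CollectI ballI allI impI)
    fix x v assume x: "x \<in> real_spec H" and v: "H *v v = x *\<^sub>R v"
    have "v \<bullet> eigenproj H y f = 0" if "y \<in> real_spec H - {x}" for y
      using hermitian_eigenvectors_orthogonal[OF H v eigenproj_eigenvector] that
      by (simp add: cinner_eq_0_iff_inner)
    then have "v \<bullet> (\<Sum>y\<in>real_spec H. eigenproj H y f) = v \<bullet> eigenproj H x f"
      by (simp add: sum.remove[OF fin x] inner_add_right inner_sum_right)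
    moreover have "cinner v (f - eigenproj H x f) = 0"
      using v unfolding eigenproj_def eigenspace_of_real_iff[symmetric]
      by (rule orth_proj(2)[OF vec_subspace_eigenspace])
    ultimately show "v \<bullet> g = 0" by (simp add: g_def inner_diff_right cinner_eq_0_iff_inner)
  qed
  have W: "subspace W"
    unfolding subspace_def W_def by (simp add: inner_add_right)
  have inv: "H *v w \<in> W" if "w \<in> W" for w
    using that by (simp add: W_def hermitian_inner_swap[OF H])
  have "g = 0"
  proof (rule ccontr)
    assume "g \<noteq> 0"
    with W inv \<open>g \<in> W\<close> obtain v c where v: "v \<in> W" "v \<noteq> 0" "H *v v = c *\<^sub>R v"
      by (rule self_adjoint_eigenvector_in_invariant_subspace[OF matrix_vector_mul_linear
          hermitian_inner_swap[OF H]])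
    then have "c \<in> real_spec H" by (auto simp: real_spec_iff)
    with v have "v \<bullet> v = 0" by (auto simp: W_def)
    with \<open>v \<noteq> 0\<close> show False by simp
  qed
  then show ?thesis by (simp add: g_def)
qed

section \<open>Power spectra\<close>

lemma sum_norm_eigenproj_squared:
  assumes H: "hermitian_mat H"
  shows "(\<Sum>x\<in>real_spec H. (norm (eigenproj H x f))\<^sup>2) = (norm f)\<^sup>2"
proof -
  have "(\<Sum>x\<in>real_spec H. (norm (eigenproj H x f))\<^sup>2) = (\<Sum>x\<in>real_spec H. f \<bullet> eigenproj H x f)"
    by (simp add: eigenproj_def inner_orth_proj_self vec_subspace_eigenspace)
  also have "\<dots> = (norm f)\<^sup>2"
    by (simp add: hermitian_sum_eigenproj[OF H] power2_norm_eq_inner flip: inner_sum_right)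
  finally show ?thesis .
qed

lemma sum_norm_eigenproj_le:
  fixes H :: "complex ^ 'n ^ 'n"
  assumes H: "hermitian_mat H"
  shows "(\<Sum>x\<in>real_spec H. norm (eigenproj H x f)) \<le> sqrt (CARD('n)) * norm f"
proof -
  have "(\<Sum>x\<in>real_spec H. norm (eigenproj H x f))\<^sup>2
      \<le> (\<Sum>x\<in>real_spec H. (norm (eigenproj H x f))\<^sup>2) * card (real_spec H)"
    by (rule sum_squared_le_sum_of_squares)
  also have "\<dots> \<le> (norm f)\<^sup>2 * CARD('n)"
    using finite_real_spec_card_le(2)[OF H] by (simp add: sum_norm_eigenproj_squared[OF H] mult_left_mono)
  finally have "(\<Sum>x\<in>real_spec H. norm (eigenproj H x f)) \<le> sqrt ((norm f)\<^sup>2 * CARD('n))"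
    by (rule real_le_rsqrt)
  then show ?thesis by (simp add: real_sqrt_mult mult.commute)
qed

lemma pmf_power_spectrum:
  assumes H: "hermitian_mat H" and f: "norm f = 1"
  shows "pmf (power_spectrum H f) x = (if x \<in> real_spec H then (norm (eigenproj H x f))\<^sup>2 else 0)"
proof -
  have "Re (cinner f (orth_proj (eigenspace H (complex_of_real x)) f)) = (norm (eigenproj H x f))\<^sup>2" for x
    by (simp add: Re_cinner eigenproj_def inner_orth_proj_self vec_subspace_eigenspace)
  then have "power_spectrum H f = embed_pmf (\<lambda>x. if x \<in> real_spec H then (norm (eigenproj H x f))\<^sup>2 else 0)"
    unfolding power_spectrum_def real_spec_def by (simp only: mem_Collect_eq)
  also have "pmf \<dots> x = (if x \<in> real_spec H then (norm (eigenproj H x f))\<^sup>2 else 0)"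
    using finite_real_spec_card_le(1)[OF H] sum_norm_eigenproj_squared[OF H, of f] f
    by (intro pmf_embed_pmf_finite_support[of "real_spec H"]) auto
  finally show ?thesis .
qed

lemma set_pmf_power_spectrum:
  "hermitian_mat H \<Longrightarrow> norm f = 1 \<Longrightarrow> set_pmf (power_spectrum H f) \<subseteq> real_spec H"
  by (auto simp: set_pmf_iff pmf_power_spectrum split: if_splits)

lemma sum_inner_eigenproj_eq_pmf:
  assumes "hermitian_mat H" "hermitian_mat H'" "norm f = 1" "x \<in> real_spec H"
  shows "(\<Sum>y\<in>real_spec H'. eigenproj H x f \<bullet> eigenproj H' y f) = pmf (power_spectrum H f) x"
proof -
  have "(\<Sum>y\<in>real_spec H'. eigenproj H x f \<bullet> eigenproj H' y f) = f \<bullet> eigenproj H x f"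
    by (simp add: hermitian_sum_eigenproj[OF assms(2)] inner_commute flip: inner_sum_right)
  also have "\<dots> = pmf (power_spectrum H f) x"
    using assms by (simp add: pmf_power_spectrum eigenproj_def inner_orth_proj_self vec_subspace_eigenspace)
  finally show ?thesis .
qed

lemma opnorm2_nonneg: "0 \<le> opnorm2 A"
  unfolding opnorm2_def by (rule onorm_pos_le[OF matrix_vector_mul_bounded_linear])

lemma eigenvalue_gap_inner_le:
  assumes H: "hermitian_mat H" and v: "H *v v = x *\<^sub>R v" and w: "H' *v w = y *\<^sub>R w"
  shows "\<bar>v \<bullet> w\<bar> * dist x y \<le> opnorm2 (H - H') * (norm v * norm w)"
proof -
  have "(x - y) * (v \<bullet> w) = v \<bullet> ((H - H') *v w)"
    using hermitian_inner_swap[OF H, of v w] v w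
    by (simp add: matrix_vector_mult_diff_rdistrib inner_diff_right algebra_simps)
  also have "\<bar>\<dots>\<bar> \<le> norm v * norm ((H - H') *v w)"
    by (rule Cauchy_Schwarz_ineq2)
  also have "\<dots> \<le> norm v * (opnorm2 (H - H') * norm w)"
    unfolding opnorm2_def
    by (intro mult_left_mono onorm matrix_vector_mul_bounded_linear) simp
  finally show ?thesis by (simp add: abs_mult dist_real_def mult_ac)
qed

theorem theorem3p1:
  fixes f :: "complex ^ 'n" and H H' :: "complex ^ 'n ^ 'n"
  assumes "norm f = 1"
    and "hermitian_mat H" and "hermitian_mat H'"
  shows "W1 (power_spectrum H f) (power_spectrum H' f) \<le> real CARD('n) * opnorm2 (H - H')"
proof -
  let ?P = "\<lambda>x. eigenproj H x f" and ?P' = "\<lambda>y. eigenproj H' y f" and ?n = "real CARD('n)"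
  have rows: "(\<Sum>y\<in>real_spec H'. ?P x \<bullet> ?P' y) = pmf (power_spectrum H f) x" if "x \<in> real_spec H" for x
    using sum_inner_eigenproj_eq_pmf[OF assms(2,3,1) that] .
  have cols: "(\<Sum>x\<in>real_spec H. ?P x \<bullet> ?P' y) = pmf (power_spectrum H' f) y" if "y \<in> real_spec H'" for y
    using sum_inner_eigenproj_eq_pmf[OF assms(3,2,1) that] by (simp add: inner_commute)
  have "W1 (power_spectrum H f) (power_spectrum H' f)
      \<le> (\<Sum>x\<in>real_spec H. \<Sum>y\<in>real_spec H'. \<bar>?P x \<bullet> ?P' y\<bar> * dist x y)"
    using assms finite_real_spec_card_le(1) set_pmf_power_spectrum
    by (intro W1_le_signed_plan_cost rows cols) simp_all
  also have "\<dots> \<le> (\<Sum>x\<in>real_spec H. \<Sum>y\<in>real_spec H'. opnorm2 (H - H') * (norm (?P x) * norm (?P' y)))"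
    by (intro sum_mono eigenvalue_gap_inner_le[OF assms(2) eigenproj_eigenvector eigenproj_eigenvector])
  also have "\<dots> = opnorm2 (H - H') * ((\<Sum>x\<in>real_spec H. norm (?P x)) * (\<Sum>y\<in>real_spec H'. norm (?P' y)))"
    unfolding sum_product by (simp only: sum_distrib_left)
  also have "\<dots> \<le> opnorm2 (H - H') * (sqrt ?n * sqrt ?n)"
    using sum_norm_eigenproj_le[OF assms(2), of f] sum_norm_eigenproj_le[OF assms(3), of f] assms(1)
    by (intro mult_left_mono[OF mult_mono] opnorm2_nonneg sum_nonneg) simp_all
  finally show ?thesis by (simp add: mult.commute)
qed

end
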